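(* Let $\mathcal{H}=(\mathcal{A},\Delta_{\mathcal{A}},S_{\mathcal{A}},\varepsilon_{\mathcal{A}})$ be a Hopf algebra over a field $k$, let $\mathcal{B},\mathcal{C}$ be unital $k$-algebras and $\Phi:\mathcal{A}\to\mathcal{B}$, $\Psi:\mathcal{A}\to\mathcal{C}$ surjective unital algebra homomorphisms. Then $\Psi$ and $\Phi$ cocommute, i.e. $(\Psi\otimes\Phi)\circ\Delta_{\mathcal{A}}=(\Psi\otimes\Phi)\circ\Delta_{\mathcal{A}}^{\mathrm{op}}$, if and only if \[(\Phi\otimes\Psi)(\mathrm{ad}(x))=\mathds{1}_{\mathcal{B}}\otimes\Psi(x)\quad\text{for all }x\in\mathcal{A}.\]
   Context: Sweedler notation $\Delta_{\mathcal{A}}(x)=x_{(1)}\otimes x_{(2)}$, $(\Delta_{\mathcal{A}}\otimes\mathrm{id})\Delta_{\mathcal{A}}(x)=x_{(1)}\otimes x_{(2)}\otimes x_{(3)}$. $\Delta_{\mathcal{A}}^{\mathrm{op}}=\sigma\circ\Delta_{\mathcal{A}}$ is the opposite comultiplication, $\Delta^{\mathrm{op}}_{\mathcal{A}}(x)=x_{(2)}\otimes x_{(1)}$. The adjoint coaction $\mathrm{ad}:\mathcal{A}\to\mathcal{A}\otimes\mathcal{A}$ is the linear map $\mathrm{ad}(x)=x_{(1)}S_{\mathcal{A}}(x_{(3)})\otimes x_{(2)}$. *)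

theory Defs
  imports Main
begin

text \<open>A unital k-algebra: a type with ring and unital multiplication (the unit is
not required to differ from 0), plus a scalar multiplication by the field 'k
making it a k-vector space with bilinear multiplication.\<close>

definition k_algebra :: "('k::field \<Rightarrow> 'a::{ring,monoid_mult} \<Rightarrow> 'a) \<Rightarrow> bool" where
  "k_algebra s \<longleftrightarrow>
     (\<forall>c x y. s c (x + y) = s c x + s c y) \<and>
     (\<forall>c d x. s (c + d) x = s c x + s d x) \<and>
     (\<forall>c d x. s c (s d x) = s (c * d) x) \<and>
     (\<forall>x. s 1 x = x) \<and>
     (\<forall>c x y. s c (x * y) = s c x * y \<and> s c (x * y) = x * s c y)"

definition k_linear :: "('k::field \<Rightarrow> 'a::ab_group_add \<Rightarrow> 'a) \<Rightarrow> ('k \<Rightarrow> 'b::ab_group_add \<Rightarrow> 'b)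
    \<Rightarrow> ('a \<Rightarrow> 'b) \<Rightarrow> bool" where
  "k_linear s1 s2 f \<longleftrightarrow> (\<forall>x y. f (x + y) = f x + f y) \<and> (\<forall>c x. f (s1 c x) = s2 c (f x))"

definition unital_alg_hom :: "('k::field \<Rightarrow> 'a::{ring,monoid_mult} \<Rightarrow> 'a)
    \<Rightarrow> ('k \<Rightarrow> 'b::{ring,monoid_mult} \<Rightarrow> 'b) \<Rightarrow> ('a \<Rightarrow> 'b) \<Rightarrow> bool" where
  "unital_alg_hom s1 s2 f \<longleftrightarrow> k_linear s1 s2 f \<and> (\<forall>x y. f (x * y) = f x * f y) \<and> f 1 = 1"

text \<open>The free k-vector space on a set X is modelled by functions X => k;
a formal sum of generators is given by a list. The tensor product
V (x) W is the free vector space on V x W modulo the subspace spanned by the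
bilinearity relators; so an element of V (x) W is represented by a finite list
of pairs (v_i, w_i), standing for the sum of v_i (x) w_i, and two representatives
denote the same tensor iff their difference lies in the span of the relators.
Threefold tensors are treated the same way with trilinearity relators.\<close>

definition gen :: "'x \<Rightarrow> 'x \<Rightarrow> 'k::field" where
  "gen x = (\<lambda>y. if y = x then 1 else 0)"

definition fsum :: "'x list \<Rightarrow> 'x \<Rightarrow> 'k::field" where
  "fsum xs = (\<lambda>y. sum_list (map (\<lambda>x. gen x y) xs))"

definition lin_comb :: "('k::field \<times> ('x \<Rightarrow> 'k)) list \<Rightarrow> 'x \<Rightarrow> 'k" where
  "lin_comb l = (\<lambda>y. sum_list (map (\<lambda>(c, r). c * r y) l))"

definition in_span :: "('x \<Rightarrow> 'k::field) set \<Rightarrow> ('x \<Rightarrow> 'k) \<Rightarrow> bool" where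
  "in_span R t \<longleftrightarrow> (\<exists>l. set (map snd l) \<subseteq> R \<and> t = lin_comb l)"

definition rel2 :: "('k::field \<Rightarrow> 'a::ab_group_add \<Rightarrow> 'a) \<Rightarrow> ('k \<Rightarrow> 'b::ab_group_add \<Rightarrow> 'b)
    \<Rightarrow> ('a \<times> 'b \<Rightarrow> 'k) set" where
  "rel2 sA sB =
     {(\<lambda>z. gen (a + a', b) z - gen (a, b) z - gen (a', b) z) | a a' b. True} \<union>
     {(\<lambda>z. gen (a, b + b') z - gen (a, b) z - gen (a, b') z) | a b b'. True} \<union>
     {(\<lambda>z. gen (sA c a, b) z - c * gen (a, b) z) | c a b. True} \<union>
     {(\<lambda>z. gen (a, sB c b) z - c * gen (a, b) z) | c a b. True}"

definition teq2 :: "('k::field \<Rightarrow> 'a::ab_group_add \<Rightarrow> 'a) \<Rightarrow> ('k \<Rightarrow> 'b::ab_group_add \<Rightarrow> 'b)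
    \<Rightarrow> ('a \<times> 'b) list \<Rightarrow> ('a \<times> 'b) list \<Rightarrow> bool" where
  "teq2 sA sB t u \<longleftrightarrow> in_span (rel2 sA sB) (\<lambda>z. fsum t z - fsum u z)"

definition rel3 :: "('k::field \<Rightarrow> 'a::ab_group_add \<Rightarrow> 'a) \<Rightarrow> ('k \<Rightarrow> 'b::ab_group_add \<Rightarrow> 'b)
    \<Rightarrow> ('k \<Rightarrow> 'c::ab_group_add \<Rightarrow> 'c) \<Rightarrow> ('a \<times> 'b \<times> 'c \<Rightarrow> 'k) set" where
  "rel3 sA sB sC =
     {(\<lambda>z. gen (a + a', b, d) z - gen (a, b, d) z - gen (a', b, d) z) | a a' b d. True} \<union>
     {(\<lambda>z. gen (a, b + b', d) z - gen (a, b, d) z - gen (a, b', d) z) | a b b' d. True} \<union>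
     {(\<lambda>z. gen (a, b, d + d') z - gen (a, b, d) z - gen (a, b, d') z) | a b d d'. True} \<union>
     {(\<lambda>z. gen (sA c a, b, d) z - c * gen (a, b, d) z) | c a b d. True} \<union>
     {(\<lambda>z. gen (a, sB c b, d) z - c * gen (a, b, d) z) | c a b d. True} \<union>
     {(\<lambda>z. gen (a, b, sC c d) z - c * gen (a, b, d) z) | c a b d. True}"

definition teq3 :: "('k::field \<Rightarrow> 'a::ab_group_add \<Rightarrow> 'a) \<Rightarrow> ('k \<Rightarrow> 'b::ab_group_add \<Rightarrow> 'b)
    \<Rightarrow> ('k \<Rightarrow> 'c::ab_group_add \<Rightarrow> 'c) \<Rightarrow> ('a \<times> 'b \<times> 'c) list \<Rightarrow> ('a \<times> 'b \<times> 'c) list \<Rightarrow> bool" where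
  "teq3 sA sB sC t u \<longleftrightarrow> in_span (rel3 sA sB sC) (\<lambda>z. fsum t z - fsum u z)"

text \<open>The comultiplication is a map Delta : A -> A (x) A, given by choosing for each x a
representative list of pairs (Sweedler: x_(1) (x) x_(2)). All axioms are stated
up to equality in the tensor product, so the choice of representatives is immaterial.\<close>

definition hopf_algebra ::
  "('k::field \<Rightarrow> 'a::{ring,monoid_mult} \<Rightarrow> 'a) \<Rightarrow> ('a \<Rightarrow> ('a \<times> 'a) list)
     \<Rightarrow> ('a \<Rightarrow> 'a) \<Rightarrow> ('a \<Rightarrow> 'k) \<Rightarrow> bool" where
  "hopf_algebra s \<Delta> S \<epsilon> \<longleftrightarrow>
     k_algebra s \<and>
     \<comment> \<open>Delta is k-linear\<close>
     (\<forall>x y. teq2 s s (\<Delta> (x + y)) (\<Delta> x @ \<Delta> y)) \<and>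
     (\<forall>c x. teq2 s s (\<Delta> (s c x)) (map (\<lambda>(a, b). (s c a, b)) (\<Delta> x))) \<and>
     \<comment> \<open>Delta is a unital algebra homomorphism into A (x) A\<close>
     (\<forall>x y. teq2 s s (\<Delta> (x * y)) [(a * a', b * b'). (a, b) \<leftarrow> \<Delta> x, (a', b') \<leftarrow> \<Delta> y]) \<and>
     teq2 s s (\<Delta> 1) [(1, 1)] \<and>
     \<comment> \<open>coassociativity\<close>
     (\<forall>x. teq3 s s s [(a1, a2, b). (a, b) \<leftarrow> \<Delta> x, (a1, a2) \<leftarrow> \<Delta> a]
                     [(a, b1, b2). (a, b) \<leftarrow> \<Delta> x, (b1, b2) \<leftarrow> \<Delta> b]) \<and>
     \<comment> \<open>counit: unital algebra homomorphism A -> k\<close>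
     k_linear s (*) \<epsilon> \<and> (\<forall>x y. \<epsilon> (x * y) = \<epsilon> x * \<epsilon> y) \<and> \<epsilon> 1 = 1 \<and>
     (\<forall>x. sum_list [s (\<epsilon> a) b. (a, b) \<leftarrow> \<Delta> x] = x) \<and>
     (\<forall>x. sum_list [s (\<epsilon> b) a. (a, b) \<leftarrow> \<Delta> x] = x) \<and>
     \<comment> \<open>antipode: k-linear, convolution inverse of the identity\<close>
     k_linear s s S \<and>
     (\<forall>x. sum_list [S a * b. (a, b) \<leftarrow> \<Delta> x] = s (\<epsilon> x) 1) \<and>
     (\<forall>x. sum_list [a * S b. (a, b) \<leftarrow> \<Delta> x] = s (\<epsilon> x) 1)"

text \<open>ad(x) = x_(1) S(x_(3)) (x) x_(2), where (Delta (x) id) Delta x = x_(1) (x) x_(2) (x) x_(3).\<close>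
definition ad :: "('a::{ring,monoid_mult} \<Rightarrow> ('a \<times> 'a) list) \<Rightarrow> ('a \<Rightarrow> 'a) \<Rightarrow> 'a \<Rightarrow> ('a \<times> 'a) list" where
  "ad \<Delta> S x = [(a1 * S b, a2). (a, b) \<leftarrow> \<Delta> x, (a1, a2) \<leftarrow> \<Delta> a]"

definition tmap :: "('a \<Rightarrow> 'b) \<Rightarrow> ('c \<Rightarrow> 'd) \<Rightarrow> ('a \<times> 'c) list \<Rightarrow> ('b \<times> 'd) list" where
  "tmap f g t = map (\<lambda>(a, b). (f a, g b)) t"

definition flip_t :: "('a \<times> 'b) list \<Rightarrow> ('b \<times> 'a) list" where
  "flip_t t = map (\<lambda>(a, b). (b, a)) t"

end

theory Submission
  imports Defs
begin

text \<open>
  Two identities hold in every Hopf algebra, in Sweedler notation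
  \<open>x\<^sub>2 S(x\<^sub>3) \<otimes> x\<^sub>1 = 1 \<otimes> x\<close> (the legs of \<open>ad(x)\<close> with the first two swapped) and
  \<open>ad(x\<^sub>1) (x\<^sub>2 \<otimes> 1) = x\<^sub>1 S(x\<^sub>3) x\<^sub>4 \<otimes> x\<^sub>2 = \<Delta>(x)\<close>; both follow from coassociativity,
  the antipode axiom and the counit axiom.
  If \<open>\<Psi>\<close> and \<open>\<Phi>\<close> cocommute, the first two legs inside \<open>(\<Phi> \<otimes> \<Psi>)(ad(x))\<close> may be swapped,
  and the first identity gives \<open>1 \<otimes> \<Psi>(x)\<close>. Conversely, applying \<open>\<Phi> \<otimes> \<Psi>\<close> to the second
  identity and inserting the hypothesis for \<open>(\<Phi> \<otimes> \<Psi>)(ad(x\<^sub>1))\<close> yields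
  \<open>\<Phi>(x\<^sub>2) \<otimes> \<Psi>(x\<^sub>1) = \<Phi>(x\<^sub>1) \<otimes> \<Psi>(x\<^sub>2)\<close>.

  Since tensors are lists modulo the span of the multilinearity relators, every map on
  tensors has to be shown well defined: a map given on generators descends to the quotient
  as soon as it sends each relator into the span of the target relators.
\<close>

text \<open>A list \<open>l\<close> of coefficient/generator pairs denotes the element \<open>formal l\<close> of the free
  vector space; \<open>lin_ext F l\<close> is its image under the linear extension of \<open>F\<close>, where
  \<open>F x\<close> is a formal sum of generators.\<close>

definition wsum :: "('x \<Rightarrow> 'k::field) \<Rightarrow> ('k \<times> 'x) list \<Rightarrow> 'k" where
  "wsum g l = sum_list (map (\<lambda>(c, x). c * g x) l)"

definition formal :: "('k::field \<times> 'x) list \<Rightarrow> 'x \<Rightarrow> 'k" where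
  "formal l = (\<lambda>y. wsum (\<lambda>x. gen x y) l)"

definition lin_ext :: "('x \<Rightarrow> 'y list) \<Rightarrow> ('k::field \<times> 'x) list \<Rightarrow> 'y \<Rightarrow> 'k" where
  "lin_ext F l = (\<lambda>z. wsum (\<lambda>x. fsum (F x) z) l)"

lemma wsum_Nil [simp]: "wsum g [] = 0"
  and wsum_Cons [simp]: "wsum g ((c, x) # l) = c * g x + wsum g l"
  and wsum_append [simp]: "wsum g (l @ l') = wsum g l + wsum g l'"
  by (simp_all add: wsum_def)

lemma wsum_scale: "wsum g (map (\<lambda>(d, x). (c * d, x)) l) = c * wsum g l"
  by (induction l) (auto simp: algebra_simps)

lemma wsum_const_coeff: "wsum g (map (\<lambda>x. (c, x)) t) = c * sum_list (map g t)"
  by (induction t) (auto simp: algebra_simps)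

lemma wsum_eq_sum_formal:
  assumes "finite A" "snd ` set l \<subseteq> A"
  shows "wsum g l = (\<Sum>y\<in>A. formal l y * g y)"
  using assms(2)
proof (induction l)
  case Nil
  then show ?case by (simp add: formal_def)
next
  case (Cons p l)
  obtain c x where p: "p = (c, x)" by force
  with Cons.prems have "x \<in> A" by simp
  have "(\<Sum>y\<in>A. c * gen x y * g y) = (\<Sum>y\<in>A. if x = y then c * g y else 0)"
    by (rule sum.cong) (auto simp: gen_def)
  also have "\<dots> = c * g x"
    using assms(1) \<open>x \<in> A\<close> by simp
  finally have "(\<Sum>y\<in>A. c * gen x y * g y) = c * g x" .
  with Cons p show ?case
    by (simp add: formal_def sum.distrib algebra_simps)
qed

lemma wsum_cong_formal:
  assumes "formal l1 = formal l2"
  shows "wsum g l1 = wsum g l2"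
proof -
  let ?A = "snd ` set l1 \<union> snd ` set l2"
  show ?thesis
    using wsum_eq_sum_formal[of ?A l1 g] wsum_eq_sum_formal[of ?A l2 g] assms by auto
qed

lemma fsum_Nil [simp]: "fsum [] z = 0"
  and fsum_Cons [simp]: "fsum (x # xs) z = gen x z + fsum xs z"
  and fsum_append [simp]: "fsum (xs @ ys) z = fsum xs z + fsum ys z"
  by (simp_all add: fsum_def)

lemma fsum_concat_map: "fsum (concat (map F t)) z = sum_list (map (\<lambda>x. fsum (F x) z) t)"
  by (induction t) auto

lemma in_span_cong: "in_span R f \<Longrightarrow> (\<And>z. f z = g z) \<Longrightarrow> in_span R g"
  by (metis ext)

lemma in_span_zero: "in_span R (\<lambda>z. 0)"
  unfolding in_span_def by (rule exI[of _ "[]"]) (simp add: lin_comb_def)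

lemma in_span_gen: "r \<in> R \<Longrightarrow> in_span R r"
  unfolding in_span_def by (rule exI[of _ "[(1, r)]"]) (auto simp: lin_comb_def)

lemma in_span_add:
  assumes "in_span R f" "in_span R g"
  shows "in_span R (\<lambda>z. f z + g z)"
proof -
  from assms obtain l1 l2 where "set (map snd l1) \<subseteq> R" "f = lin_comb l1"
    "set (map snd l2) \<subseteq> R" "g = lin_comb l2"
    by (auto simp: in_span_def)
  then show ?thesis
    unfolding in_span_def by (intro exI[of _ "l1 @ l2"]) (auto simp: lin_comb_def)
qed

lemma in_span_scale:
  assumes "in_span R f"
  shows "in_span R (\<lambda>z. c * f z)"
proof -
  from assms obtain l where "set (map snd l) \<subseteq> R" "f = lin_comb l"
    by (auto simp: in_span_def)
  moreover have "lin_comb (map (\<lambda>(d, r). (c * d, r)) l) z = c * lin_comb l z" for z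
    by (induction l) (auto simp: lin_comb_def algebra_simps)
  ultimately show ?thesis
    unfolding in_span_def by (intro exI[of _ "map (\<lambda>(d, r). (c * d, r)) l"]) (auto simp: comp_def split_def)
qed

lemma in_span_diff: "in_span R f \<Longrightarrow> in_span R g \<Longrightarrow> in_span R (\<lambda>z. f z - g z)"
  using in_span_add[OF _ in_span_scale[of R g "-1"], of f] by simp

definition maps_into_span :: "('x \<Rightarrow> 'y list) \<Rightarrow> ('y \<Rightarrow> 'k::field) set \<Rightarrow> ('x \<Rightarrow> 'k) \<Rightarrow> bool" where
  "maps_into_span F R r \<longleftrightarrow> (\<exists>l. r = formal l \<and> in_span R (lin_ext F l))"

lemma maps_into_span_lin_comb:
  assumes "\<forall>r\<in>RA. maps_into_span F RB r" "set (map snd l) \<subseteq> RA"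
  shows "maps_into_span F RB (lin_comb l)"
  using assms(2)
proof (induction l)
  case Nil
  show ?case
    unfolding maps_into_span_def
    by (rule exI[of _ "[]"]) (simp add: lin_comb_def formal_def lin_ext_def in_span_zero)
next
  case (Cons p l)
  obtain c r where p: "p = (c, r)" by force
  with Cons.prems assms(1) obtain L where L: "r = formal L" "in_span RB (lin_ext F L)"
    by (auto simp: maps_into_span_def)
  from Cons p obtain L' where L': "lin_comb l = formal L'" "in_span RB (lin_ext F L')"
    by (auto simp: maps_into_span_def)
  let ?L = "map (\<lambda>(d, x). (c * d, x)) L @ L'"
  have "lin_comb (p # l) = formal ?L"
    using L(1) fun_cong[OF L'(1)] by (auto simp: p lin_comb_def formal_def wsum_scale)
  moreover have "in_span RB (lin_ext F ?L)"
    using in_span_add[OF in_span_scale[OF L(2), of c] L'(2)]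
    by (simp add: lin_ext_def wsum_scale)
  ultimately show ?case
    unfolding maps_into_span_def by blast
qed

lemma in_span_concat_map:
  assumes "\<forall>r\<in>RA. maps_into_span F RB r"
    and "in_span RA (\<lambda>z. fsum t z - fsum u z)"
  shows "in_span RB (\<lambda>z. fsum (concat (map F t)) z - fsum (concat (map F u)) z)"
proof -
  from assms(2) obtain l where l: "set (map snd l) \<subseteq> RA" "(\<lambda>z. fsum t z - fsum u z) = lin_comb l"
    by (auto simp: in_span_def)
  from maps_into_span_lin_comb[OF assms(1) l(1)] obtain L
    where L: "lin_comb l = formal L" "in_span RB (lin_ext F L)"
    by (auto simp: maps_into_span_def)
  let ?T = "map (\<lambda>x. (1, x)) t @ map (\<lambda>x. (-1, x)) u"
  have T_L: "formal ?T = formal L"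
    using l(2) L(1) by (simp add: formal_def wsum_const_coeff fsum_def)
  have "lin_ext F ?T = lin_ext F L"
    unfolding lin_ext_def by (simp only: wsum_cong_formal[OF T_L])
  with L(2) show ?thesis
    by (simp add: lin_ext_def wsum_const_coeff fsum_concat_map)
qed

lemma tmap_Nil [simp]: "tmap f g [] = []"
  by (simp add: tmap_def)

lemma tmap_Cons [simp]: "tmap f g ((a, b) # t) = (f a, g b) # tmap f g t"
  by (simp add: tmap_def)

lemma tmap_append [simp]: "tmap f g (t @ u) = tmap f g t @ tmap f g u"
  by (simp add: tmap_def)

lemma tmap_tmap [simp]: "tmap f g (tmap f' g' t) = tmap (\<lambda>a. f (f' a)) (\<lambda>b. g (g' b)) t"
  by (simp add: tmap_def split_def comp_def)

lemma flip_t_tmap [simp]: "flip_t (tmap f g t) = tmap g f (flip_t t)"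
  by (simp add: tmap_def flip_t_def split_def comp_def)

lemma flip_t_flip_t [simp]: "flip_t (flip_t t) = t"
  by (simp add: flip_t_def split_def comp_def)

lemma tmap_concat [simp]: "tmap f g (concat ts) = concat (map (tmap f g) ts)"
  by (induction ts) simp_all

lemma teq2_of_fsum_eq:
  fixes s1 :: "'k::field \<Rightarrow> 'a::ab_group_add \<Rightarrow> 'a"
  assumes "\<And>z. fsum t z = (fsum u z :: 'k)"
  shows "teq2 s1 s2 t u"
  unfolding teq2_def by (rule in_span_cong[OF in_span_zero]) (simp add: assms)

lemma teq2_refl [simp]: "teq2 s1 s2 t t"
  by (rule teq2_of_fsum_eq) simp

lemma teq2_sym: "teq2 s1 s2 t u \<Longrightarrow> teq2 s1 s2 u t"
  unfolding teq2_def by (drule in_span_scale[where c = "-1"]) simp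

lemma teq2_trans [trans]: "teq2 s1 s2 t u \<Longrightarrow> teq2 s1 s2 u v \<Longrightarrow> teq2 s1 s2 t v"
  unfolding teq2_def by (drule (1) in_span_add) simp

lemma teq2_append: "teq2 s1 s2 t u \<Longrightarrow> teq2 s1 s2 t' u' \<Longrightarrow> teq2 s1 s2 (t @ t') (u @ u')"
  unfolding teq2_def by (drule (1) in_span_add) (simp add: algebra_simps)

lemma teq2_concat_map:
  "(\<And>i. i \<in> set xs \<Longrightarrow> teq2 s1 s2 (f i) (g i)) \<Longrightarrow> teq2 s1 s2 (concat (map f xs)) (concat (map g xs))"
  by (induction xs) (auto intro: teq2_append)

lemma teq2_add_left: "teq2 s1 s2 [(a + a', b)] [(a, b), (a', b)]"
proof -
  have "(\<lambda>z. gen (a + a', b) z - gen (a, b) z - gen (a', b) z) \<in> rel2 s1 s2"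
    unfolding rel2_def by blast
  then show ?thesis
    unfolding teq2_def by (rule in_span_cong[OF in_span_gen]) simp
qed

lemma teq2_add_right: "teq2 s1 s2 [(a, b + b')] [(a, b), (a, b')]"
proof -
  have "(\<lambda>z. gen (a, b + b') z - gen (a, b) z - gen (a, b') z) \<in> rel2 s1 s2"
    unfolding rel2_def by blast
  then show ?thesis
    unfolding teq2_def by (rule in_span_cong[OF in_span_gen]) simp
qed

lemma teq2_scale_swap: "teq2 s1 s2 [(s1 c a, b)] [(a, s2 c b)]"
proof -
  have "(\<lambda>z. gen (s1 c a, b) z - c * gen (a, b) z) \<in> rel2 s1 s2"
    and "(\<lambda>z. gen (a, s2 c b) z - c * gen (a, b) z) \<in> rel2 s1 s2"
    unfolding rel2_def by blast+
  from in_span_diff[OF in_span_gen[OF this(1)] in_span_gen[OF this(2)]] show ?thesis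
    unfolding teq2_def by (rule in_span_cong) simp
qed

lemma in_span_rel2_scale:
  "in_span (rel2 sY sZ) (\<lambda>z. fsum (tmap (sY c) id L) z - c * fsum L z)"
proof (induction L)
  case Nil
  then show ?case by (simp add: tmap_def in_span_zero)
next
  case (Cons p L)
  obtain a b where p: "p = (a, b)" by force
  have "(\<lambda>z. gen (sY c a, b) z - c * gen (a, b) z) \<in> rel2 sY sZ"
    unfolding rel2_def by blast
  from in_span_add[OF in_span_gen[OF this] Cons] show ?case
    by (rule in_span_cong) (simp add: p tmap_def algebra_simps)
qed

lemma maps_into_span_additive:
  assumes "teq2 sY sZ (F x) (F y @ F y')"
  shows "maps_into_span F (rel2 sY sZ) (\<lambda>z. gen x z - gen y z - gen y' z)"
  unfolding maps_into_span_def
proof (intro exI conjI)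
  let ?l = "[(1, x), (-1, y), (-1, y')]"
  show "(\<lambda>z. gen x z - gen y z - gen y' z) = formal ?l"
    by (simp add: formal_def fun_eq_iff)
  show "in_span (rel2 sY sZ) (lin_ext F ?l)"
    using assms unfolding teq2_def by (rule in_span_cong) (simp add: lin_ext_def)
qed

lemma maps_into_span_homogeneous:
  assumes "teq2 sY sZ (F x) (tmap (sY c) id (F y))"
  shows "maps_into_span F (rel2 sY sZ) (\<lambda>z. gen x z - c * gen y z)"
  unfolding maps_into_span_def
proof (intro exI conjI)
  let ?l = "[(1, x), (-c, y)]"
  show "(\<lambda>z. gen x z - c * gen y z) = formal ?l"
    by (simp add: formal_def)
  show "in_span (rel2 sY sZ) (lin_ext F ?l)"
    using in_span_add[OF assms[unfolded teq2_def] in_span_rel2_scale[of sY sZ c "F y"]]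
    by (rule in_span_cong) (simp add: lin_ext_def)
qed

lemma teq2_concat_map_bilinear:
  fixes F :: "'a::ab_group_add \<times> 'b::ab_group_add \<Rightarrow> ('y::ab_group_add \<times> 'z::ab_group_add) list"
    and s1 :: "'k::field \<Rightarrow> 'a \<Rightarrow> 'a" and s2 :: "'k \<Rightarrow> 'b \<Rightarrow> 'b"
    and sY :: "'k \<Rightarrow> 'y \<Rightarrow> 'y" and sZ :: "'k \<Rightarrow> 'z \<Rightarrow> 'z"
  assumes "\<And>a a' b. teq2 sY sZ (F (a + a', b)) (F (a, b) @ F (a', b))"
    and "\<And>a b b'. teq2 sY sZ (F (a, b + b')) (F (a, b) @ F (a, b'))"
    and "\<And>c a b. teq2 sY sZ (F (s1 c a, b)) (tmap (sY c) id (F (a, b)))"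
    and "\<And>c a b. teq2 sY sZ (F (a, s2 c b)) (tmap (sY c) id (F (a, b)))"
    and "teq2 s1 s2 t u"
  shows "teq2 sY sZ (concat (map F t)) (concat (map F u))"
proof -
  have "\<forall>r\<in>rel2 s1 s2. maps_into_span F (rel2 sY sZ) r"
    unfolding rel2_def[of s1 s2]
    using assms(1-4) by (auto intro!: maps_into_span_additive maps_into_span_homogeneous)
  then show ?thesis
    using assms(5) unfolding teq2_def by (rule in_span_concat_map)
qed

lemma teq2_concat_map_trilinear:
  fixes F :: "'a::ab_group_add \<times> 'b::ab_group_add \<times> 'c::ab_group_add \<Rightarrow> ('y::ab_group_add \<times> 'z::ab_group_add) list"
    and s1 :: "'k::field \<Rightarrow> 'a \<Rightarrow> 'a" and s2 :: "'k \<Rightarrow> 'b \<Rightarrow> 'b" and s3 :: "'k \<Rightarrow> 'c \<Rightarrow> 'c"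
    and sY :: "'k \<Rightarrow> 'y \<Rightarrow> 'y" and sZ :: "'k \<Rightarrow> 'z \<Rightarrow> 'z"
  assumes "\<And>a a' b d. teq2 sY sZ (F (a + a', b, d)) (F (a, b, d) @ F (a', b, d))"
    and "\<And>a b b' d. teq2 sY sZ (F (a, b + b', d)) (F (a, b, d) @ F (a, b', d))"
    and "\<And>a b d d'. teq2 sY sZ (F (a, b, d + d')) (F (a, b, d) @ F (a, b, d'))"
    and "\<And>c a b d. teq2 sY sZ (F (s1 c a, b, d)) (tmap (sY c) id (F (a, b, d)))"
    and "\<And>c a b d. teq2 sY sZ (F (a, s2 c b, d)) (tmap (sY c) id (F (a, b, d)))"
    and "\<And>c a b d. teq2 sY sZ (F (a, b, s3 c d)) (tmap (sY c) id (F (a, b, d)))"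
    and "teq3 s1 s2 s3 t u"
  shows "teq2 sY sZ (concat (map F t)) (concat (map F u))"
proof -
  have "\<forall>r\<in>rel3 s1 s2 s3. maps_into_span F (rel2 sY sZ) r"
    unfolding rel3_def
    using assms(1-6) by (auto intro!: maps_into_span_additive maps_into_span_homogeneous)
  then show ?thesis
    using assms(7) unfolding teq2_def teq3_def by (rule in_span_concat_map)
qed

lemma teq2_tmap:
  fixes s1 :: "'k::field \<Rightarrow> 'a::ab_group_add \<Rightarrow> 'a" and s2 :: "'k \<Rightarrow> 'b::ab_group_add \<Rightarrow> 'b"
    and sY :: "'k \<Rightarrow> 'y::ab_group_add \<Rightarrow> 'y" and sZ :: "'k \<Rightarrow> 'z::ab_group_add \<Rightarrow> 'z"
  assumes "k_linear s1 sY \<alpha>" "k_linear s2 sZ \<beta>" "teq2 s1 s2 t u"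
  shows "teq2 sY sZ (tmap \<alpha> \<beta> t) (tmap \<alpha> \<beta> u)"
proof -
  have "teq2 sY sZ (concat (map (\<lambda>p. [(\<alpha> (fst p), \<beta> (snd p))]) t))
                   (concat (map (\<lambda>p. [(\<alpha> (fst p), \<beta> (snd p))]) u))"
    by (rule teq2_concat_map_bilinear[OF _ _ _ _ assms(3)])
      (use assms(1,2) in \<open>auto simp: k_linear_def tmap_def teq2_add_left teq2_add_right
        intro: teq2_sym[OF teq2_scale_swap]\<close>)
  then show ?thesis
    by (simp add: tmap_def split_def)
qed

lemma teq2_flip:
  fixes s1 :: "'k::field \<Rightarrow> 'a::ab_group_add \<Rightarrow> 'a" and s2 :: "'k \<Rightarrow> 'b::ab_group_add \<Rightarrow> 'b"
  assumes "teq2 s1 s2 t u"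
  shows "teq2 s2 s1 (flip_t t) (flip_t u)"
proof -
  have "teq2 s2 s1 (concat (map (\<lambda>p. [(snd p, fst p)]) t)) (concat (map (\<lambda>p. [(snd p, fst p)]) u))"
    by (rule teq2_concat_map_bilinear[OF _ _ _ _ assms])
      (auto simp: tmap_def teq2_add_left teq2_add_right intro: teq2_sym[OF teq2_scale_swap])
  then show ?thesis
    by (simp add: flip_t_def split_def)
qed

lemma teq2_sum_list_additive:
  assumes "\<And>m m'. teq2 s1 s2 (T (m + m')) (T m @ T m')"
  shows "teq2 s1 s2 (T (sum_list ms)) (concat (map T ms))"
proof (induction ms)
  case Nil
  have "in_span (rel2 s1 s2) (\<lambda>z. - fsum (T 0) z)"
    using assms[of 0 0, unfolded teq2_def] by (rule in_span_cong) simp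
  then show ?case
    unfolding teq2_def by (rule in_span_cong[OF in_span_scale[where c = "-1"]]) simp
next
  case (Cons m ms)
  have "teq2 s1 s2 (T m @ T (sum_list ms)) (T m @ concat (map T ms))"
    by (rule teq2_append[OF teq2_refl Cons.IH])
  then show ?case
    using teq2_trans[OF assms[of m "sum_list ms"]] by simp
qed

lemma teq2_sum_list_left: "teq2 s1 s2 [(sum_list (map f xs), b)] (map (\<lambda>x. (f x, b)) xs)"
  using teq2_sum_list_additive[of s1 s2 "\<lambda>m. [(m, b)]" "map f xs"]
  by (simp add: teq2_add_left comp_def)

lemma teq2_sum_list_right: "teq2 s1 s2 [(a, sum_list (map f xs))] (map (\<lambda>x. (a, f x)) xs)"
  using teq2_sum_list_additive[of s1 s2 "\<lambda>m. [(a, m)]" "map f xs"]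
  by (simp add: teq2_add_right comp_def)

lemma teq2_tmap_add_left:
  "teq2 s1 s2 (tmap (\<lambda>p. f p + g p) \<beta> t) (tmap f \<beta> t @ tmap g \<beta> t)"
proof (induction t)
  case (Cons i t)
  obtain a b where i: "i = (a, b)" by force
  have "teq2 s1 s2 ([(f a + g a, \<beta> b)] @ tmap (\<lambda>p. f p + g p) \<beta> t)
                   ([(f a, \<beta> b), (g a, \<beta> b)] @ (tmap f \<beta> t @ tmap g \<beta> t))"
    by (rule teq2_append[OF teq2_add_left Cons])
  also have "teq2 s1 s2 \<dots> (tmap f \<beta> (i # t) @ tmap g \<beta> (i # t))"
    by (rule teq2_of_fsum_eq) (simp add: i tmap_def algebra_simps)
  finally show ?case
    by (simp add: i tmap_def)
qed (simp add: tmap_def)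

lemma
  assumes "k_algebra s"
  shows k_algebra_smult_mult_left: "s c x * y = s c (x * y)"
    and k_algebra_smult_mult_right: "x * s c y = s c (x * y)"
  using assms unfolding k_algebra_def by metis+

lemma
  assumes "k_linear s1 s2 f"
  shows k_linear_add: "f (x + y) = f x + f y"
    and k_linear_smult: "f (s1 c x) = s2 c (f x)"
  using assms unfolding k_linear_def by blast+

lemma k_linear_id: "k_linear s s id"
  by (simp add: k_linear_def)

lemma k_linear_mult_right:
  "k_algebra s \<Longrightarrow> k_linear s s (\<lambda>x. x * m)"
  by (simp add: k_linear_def distrib_right k_algebra_smult_mult_left)

lemma
  assumes "unital_alg_hom s1 s2 f"
  shows unital_alg_hom_k_linear: "k_linear s1 s2 f"
    and unital_alg_hom_mult: "f (x * y) = f x * f y"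
    and unital_alg_hom_one: "f 1 = 1"
  using assms unfolding unital_alg_hom_def by blast+

lemma concat_map_comul_left:
  "concat (map F [(a1, a2, b). (a, b) \<leftarrow> xs, (a1, a2) \<leftarrow> f a])
     = concat (map (\<lambda>(a, b). concat (map (\<lambda>(a1, a2). F (a1, a2, b)) (f a))) xs)"
  by (induction xs) (auto simp: split_def comp_def)

lemma concat_map_comul_right:
  "concat (map F [(a, b1, b2). (a, b) \<leftarrow> xs, (b1, b2) \<leftarrow> f b])
     = concat (map (\<lambda>(a, b). concat (map (\<lambda>(b1, b2). F (a, b1, b2)) (f b))) xs)"
  by (induction xs) (auto simp: split_def comp_def)

locale hopf =
  fixes s :: "'k::field \<Rightarrow> 'a::{ring,monoid_mult} \<Rightarrow> 'a"
    and \<Delta> :: "'a \<Rightarrow> ('a \<times> 'a) list" and S :: "'a \<Rightarrow> 'a" and \<epsilon> :: "'a \<Rightarrow> 'k"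
  assumes hopf_algebra: "hopf_algebra s \<Delta> S \<epsilon>"
begin

lemma k_algebra: "k_algebra s"
  and comul_add: "teq2 s s (\<Delta> (x + y)) (\<Delta> x @ \<Delta> y)"
  and comul_smult: "teq2 s s (\<Delta> (s c x)) (tmap (s c) id (\<Delta> x))"
  and coassoc: "teq3 s s s [(a1, a2, b). (a, b) \<leftarrow> \<Delta> x, (a1, a2) \<leftarrow> \<Delta> a]
                         [(a, b1, b2). (a, b) \<leftarrow> \<Delta> x, (b1, b2) \<leftarrow> \<Delta> b]"
  and counit_right: "sum_list [s (\<epsilon> b) a. (a, b) \<leftarrow> \<Delta> x] = x"
  and antipode_k_linear: "k_linear s s S"
  and antipode_left: "sum_list [S a * b. (a, b) \<leftarrow> \<Delta> x] = s (\<epsilon> x) 1"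
  and antipode_right: "sum_list [a * S b. (a, b) \<leftarrow> \<Delta> x] = s (\<epsilon> x) 1"
  using hopf_algebra by (simp_all add: hopf_algebra_def tmap_def)

lemmas smult_mult_left = k_algebra_smult_mult_left[OF k_algebra]
  and smult_mult_right = k_algebra_smult_mult_right[OF k_algebra]
  and mult_right_k_linear = k_linear_mult_right[OF k_algebra]
  and antipode_add = k_linear_add[OF antipode_k_linear]
  and antipode_smult = k_linear_smult[OF antipode_k_linear]

lemma teq2_comul_sum_list: "teq2 s s (\<Delta> (sum_list xs)) (concat (map \<Delta> xs))"
  by (rule teq2_sum_list_additive) (rule comul_add)

lemma teq2_swapped_ad:
  "teq2 s s [(a2 * S b, a1). (a, b) \<leftarrow> \<Delta> x, (a1, a2) \<leftarrow> \<Delta> a] [(1, x)]"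
proof -
  define F where "F = (\<lambda>(a :: 'a, b :: 'a, c :: 'a). [(b * S c, a)])"
  have "[(a2 * S b, a1). (a, b) \<leftarrow> \<Delta> x, (a1, a2) \<leftarrow> \<Delta> a]
      = concat (map F [(a1, a2, b). (a, b) \<leftarrow> \<Delta> x, (a1, a2) \<leftarrow> \<Delta> a])"
    unfolding concat_map_comul_left by (simp add: F_def split_def)
  also have "teq2 s s \<dots> (concat (map F [(a, b1, b2). (a, b) \<leftarrow> \<Delta> x, (b1, b2) \<leftarrow> \<Delta> b]))"
    by (rule teq2_concat_map_trilinear[OF _ _ _ _ _ _ coassoc])
      (auto simp: F_def tmap_def distrib_left distrib_right antipode_add antipode_smult
        smult_mult_left smult_mult_right teq2_add_left teq2_add_right intro: teq2_sym[OF teq2_scale_swap])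
  also have "\<dots> = concat (map (\<lambda>(a, b). [(b1 * S b2, a). (b1, b2) \<leftarrow> \<Delta> b]) (\<Delta> x))"
    unfolding concat_map_comul_right by (simp add: F_def split_def)
  also have "teq2 s s \<dots> (concat (map (\<lambda>(a, b). [(1, s (\<epsilon> b) a)]) (\<Delta> x)))"
  proof (rule teq2_concat_map, clarify)
    fix a b
    have "teq2 s s [(b1 * S b2, a). (b1, b2) \<leftarrow> \<Delta> b] [(sum_list [b1 * S b2. (b1, b2) \<leftarrow> \<Delta> b], a)]"
      using teq2_sym[OF teq2_sum_list_left[of s s "\<lambda>(b1, b2). b1 * S b2" "\<Delta> b" a]]
      by (simp add: split_def)
    also have "teq2 s s \<dots> [(1, s (\<epsilon> b) a)]"
      by (simp add: antipode_right teq2_scale_swap)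
    finally show "teq2 s s [(b1 * S b2, a). (b1, b2) \<leftarrow> \<Delta> b] [(1, s (\<epsilon> b) a)]" .
  qed
  also have "teq2 s s \<dots> [(1, x)]"
    using teq2_sym[OF teq2_sum_list_right[of s s 1 "\<lambda>(a, b). s (\<epsilon> b) a" "\<Delta> x"]] counit_right[of x]
    by (simp add: split_def)
  finally show ?thesis .
qed

lemma teq2_ad_mult_comul:
  "teq2 s s (concat (map (\<lambda>(a, b). tmap (\<lambda>p. p * b) id (ad \<Delta> S a)) (\<Delta> x))) (\<Delta> x)"
proof -
  define T where "T = (\<lambda>a m. tmap (\<lambda>p. p * m) id (\<Delta> a))"
  define F where "F = (\<lambda>(a :: 'a, b :: 'a, c :: 'a). T a (S b * c))"
  have T_add: "teq2 s s (T a (m + m')) (T a m @ T a m')" for a m m'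
    using teq2_tmap_add_left[of s s "\<lambda>p. p * m" "\<lambda>p. p * m'" id "\<Delta> a"]
    by (simp add: T_def distrib_left)
  have T_smult: "T a (s c m) = tmap (s c) id (T a m)" for a c m
    by (simp add: T_def smult_mult_right id_def)
  have "concat (map (\<lambda>(a, b). tmap (\<lambda>p. p * b) id (ad \<Delta> S a)) (\<Delta> x))
      = concat (map F [(a1, a2, b). (a, b) \<leftarrow> \<Delta> x, (a1, a2) \<leftarrow> \<Delta> a])"
    unfolding concat_map_comul_left
    by (simp add: F_def T_def ad_def tmap_def map_concat split_def comp_def mult.assoc)
  also have "teq2 s s \<dots> (concat (map F [(a, b1, b2). (a, b) \<leftarrow> \<Delta> x, (b1, b2) \<leftarrow> \<Delta> b]))"
  proof (rule teq2_concat_map_trilinear[OF _ _ _ _ _ _ coassoc])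
    show "teq2 s s (F (a + a', b, c)) (F (a, b, c) @ F (a', b, c))" for a a' b c
      using teq2_tmap[OF mult_right_k_linear k_linear_id comul_add] by (simp add: F_def T_def)
    show "teq2 s s (F (s c a, b, d)) (tmap (s c) id (F (a, b, d)))" for c a b d
      using teq2_tmap[OF mult_right_k_linear k_linear_id comul_smult]
      by (simp add: F_def T_def smult_mult_left id_def)
  qed (simp_all add: F_def T_add T_smult distrib_left distrib_right antipode_add antipode_smult
      smult_mult_left smult_mult_right)
  also have "\<dots> = concat (map (\<lambda>(a, b). concat (map (T a) [S b1 * b2. (b1, b2) \<leftarrow> \<Delta> b])) (\<Delta> x))"
    unfolding concat_map_comul_right by (simp add: F_def split_def comp_def)
  also have "teq2 s s \<dots> (concat (map (\<lambda>(a, b). T a (s (\<epsilon> b) 1)) (\<Delta> x)))"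
  proof (rule teq2_concat_map, clarify)
    fix a b
    show "teq2 s s (concat (map (T a) [S b1 * b2. (b1, b2) \<leftarrow> \<Delta> b])) (T a (s (\<epsilon> b) 1))"
      using teq2_sym[OF teq2_sum_list_additive[of s s "T a" "[S b1 * b2. (b1, b2) \<leftarrow> \<Delta> b]", OF T_add]]
      by (simp only: antipode_left)
  qed
  also have "\<dots> = concat (map (\<lambda>(a, b). tmap (s (\<epsilon> b)) id (\<Delta> a)) (\<Delta> x))"
    by (simp add: T_def smult_mult_right)
  also have "teq2 s s \<dots> (concat (map \<Delta> [s (\<epsilon> b) a. (a, b) \<leftarrow> \<Delta> x]))"
    by (auto simp: comp_def intro!: teq2_concat_map teq2_sym[OF comul_smult])
  also have "teq2 s s \<dots> (\<Delta> x)"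
    using teq2_sym[OF teq2_comul_sum_list[of "[s (\<epsilon> b) a. (a, b) \<leftarrow> \<Delta> x]"]]
    by (simp only: counit_right)
  finally show ?thesis .
qed

lemma ad_condition_if_cocommute:
  assumes kB: "k_algebra sB" and \<Phi>: "unital_alg_hom s sB \<Phi>" and \<Psi>: "unital_alg_hom s sC \<Psi>"
    and cocomm: "\<And>y. teq2 sC sB (tmap \<Psi> \<Phi> (\<Delta> y)) (tmap \<Psi> \<Phi> (flip_t (\<Delta> y)))"
  shows "teq2 sB sC (tmap \<Phi> \<Psi> (ad \<Delta> S x)) [(1, \<Psi> x)]"
proof -
  have swap: "teq2 sB sC (tmap (\<lambda>p. \<Phi> p * m) \<Psi> (\<Delta> a)) (tmap (\<lambda>p. \<Phi> p * m) \<Psi> (flip_t (\<Delta> a)))"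
    for a m
    using teq2_sym[OF teq2_flip[OF teq2_tmap[OF k_linear_id k_linear_mult_right[OF kB] cocomm[of a]]]]
    by simp
  have "tmap \<Phi> \<Psi> (ad \<Delta> S x) = concat (map (\<lambda>(a, b). tmap (\<lambda>p. \<Phi> p * \<Phi> (S b)) \<Psi> (\<Delta> a)) (\<Delta> x))"
    by (simp add: ad_def tmap_def map_concat split_def comp_def unital_alg_hom_mult[OF \<Phi>])
  also have "teq2 sB sC \<dots> (concat (map (\<lambda>(a, b). tmap (\<lambda>p. \<Phi> p * \<Phi> (S b)) \<Psi> (flip_t (\<Delta> a))) (\<Delta> x)))"
    by (auto intro: teq2_concat_map swap)
  also have "\<dots> = tmap \<Phi> \<Psi> [(a2 * S b, a1). (a, b) \<leftarrow> \<Delta> x, (a1, a2) \<leftarrow> \<Delta> a]"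
    by (simp add: tmap_def flip_t_def map_concat split_def comp_def unital_alg_hom_mult[OF \<Phi>])
  also have "teq2 sB sC \<dots> (tmap \<Phi> \<Psi> [(1, x)])"
    by (rule teq2_tmap[OF unital_alg_hom_k_linear[OF \<Phi>] unital_alg_hom_k_linear[OF \<Psi>] teq2_swapped_ad])
  finally show ?thesis
    by (simp add: unital_alg_hom_one[OF \<Phi>])
qed

lemma cocommute_if_ad_condition:
  assumes kB: "k_algebra sB" and \<Phi>: "unital_alg_hom s sB \<Phi>" and \<Psi>: "unital_alg_hom s sC \<Psi>"
    and ad_cond: "\<And>y. teq2 sB sC (tmap \<Phi> \<Psi> (ad \<Delta> S y)) [(1, \<Psi> y)]"
  shows "teq2 sC sB (tmap \<Psi> \<Phi> (\<Delta> x)) (tmap \<Psi> \<Phi> (flip_t (\<Delta> x)))"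
proof -
  have "teq2 sB sC (tmap \<Phi> \<Psi> (\<Delta> x))
      (tmap \<Phi> \<Psi> (concat (map (\<lambda>(a, b). tmap (\<lambda>p. p * b) id (ad \<Delta> S a)) (\<Delta> x))))"
    by (rule teq2_tmap[OF unital_alg_hom_k_linear[OF \<Phi>] unital_alg_hom_k_linear[OF \<Psi>]
          teq2_sym[OF teq2_ad_mult_comul]])
  also have "\<dots> = concat (map (\<lambda>(a, b). tmap (\<lambda>y. y * \<Phi> b) id (tmap \<Phi> \<Psi> (ad \<Delta> S a))) (\<Delta> x))"
    by (simp add: split_def comp_def unital_alg_hom_mult[OF \<Phi>])
  also have "teq2 sB sC \<dots> (concat (map (\<lambda>(a, b). tmap (\<lambda>y. y * \<Phi> b) id [(1, \<Psi> a)]) (\<Delta> x)))"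
  proof (rule teq2_concat_map, clarify)
    fix a b
    show "teq2 sB sC (tmap (\<lambda>y. y * \<Phi> b) id (tmap \<Phi> \<Psi> (ad \<Delta> S a)))
        (tmap (\<lambda>y. y * \<Phi> b) id [(1, \<Psi> a)])"
      by (rule teq2_tmap[OF k_linear_mult_right[OF kB] k_linear_id ad_cond])
  qed
  also have "\<dots> = tmap \<Phi> \<Psi> (flip_t (\<Delta> x))"
    by (simp add: tmap_def flip_t_def split_def comp_def)
  finally have "teq2 sB sC (tmap \<Phi> \<Psi> (\<Delta> x)) (tmap \<Phi> \<Psi> (flip_t (\<Delta> x)))" .
  from teq2_sym[OF teq2_flip[OF this]] show ?thesis
    by simp
qed

end

theorem proposition3p9:
  fixes sA :: "'k::field \<Rightarrow> 'a::{ring,monoid_mult} \<Rightarrow> 'a"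
    and sB :: "'k \<Rightarrow> 'b::{ring,monoid_mult} \<Rightarrow> 'b"
    and sC :: "'k \<Rightarrow> 'c::{ring,monoid_mult} \<Rightarrow> 'c"
    and \<Delta> :: "'a \<Rightarrow> ('a \<times> 'a) list" and S :: "'a \<Rightarrow> 'a" and \<epsilon> :: "'a \<Rightarrow> 'k"
    and \<Phi> :: "'a \<Rightarrow> 'b" and \<Psi> :: "'a \<Rightarrow> 'c"
  assumes "hopf_algebra sA \<Delta> S \<epsilon>"
    and "k_algebra sB" and "k_algebra sC"
    and "unital_alg_hom sA sB \<Phi>" and "surj \<Phi>"
    and "unital_alg_hom sA sC \<Psi>" and "surj \<Psi>"
  shows "(\<forall>x. teq2 sC sB (tmap \<Psi> \<Phi> (\<Delta> x)) (tmap \<Psi> \<Phi> (flip_t (\<Delta> x))))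
     \<longleftrightarrow> (\<forall>x. teq2 sB sC (tmap \<Phi> \<Psi> (ad \<Delta> S x)) [(1, \<Psi> x)])"
proof -
  interpret hopf sA \<Delta> S \<epsilon>
    by (rule hopf.intro) (fact assms(1))
  show ?thesis
    using ad_condition_if_cocommute[OF assms(2,4,6)] cocommute_if_ad_condition[OF assms(2,4,6)]
    by blast
qed

end
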